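(* The function $g(x)=\frac{x}{\sqrt{1-x^2}}\log\left(\frac1x\right)-\arcsin(x)\log\left(\frac{1}{\arcsin(x)}\right)$ is increasing from $(0,1)$ onto $\left(0,\frac{\pi}{2}\log\frac{\pi}{2}\right)$. In particular, for $x\in(0,1)$, $$x^{x/\sqrt{1-x^2}}<\arcsin(x)^{\arcsin(x)}<\left(\frac{\pi}{2}\right)^{\pi/2}x^{x/\sqrt{1-x^2}}.$$ *)

theory Defs
  imports Complex_Main
begin

definition g49 :: "real \<Rightarrow> real" where
  "g49 x = x / sqrt (1 - x\<^sup>2) * ln (1 / x) - arcsin x * ln (1 / arcsin x)"

end

theory Submission
  imports Defs "HOL-Real_Asymp.Real_Asymp"
begin

text \<open>Substituting \<open>x = sin t\<close> turns \<open>g49\<close> into \<open>t ln t - tan t ln (sin t)\<close> on \<open>(0, \<pi>/2)\<close>,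
whose derivative \<open>ln t - ln (sin t) / cos\<^sup>2 t\<close> is positive because \<open>sin t \<le> t\<close>, \<open>ln (sin t) < 0\<close>
and \<open>cos\<^sup>2 t < 1\<close>. Its limits at the two ends of the interval are \<open>0\<close> and \<open>\<pi>/2 ln (\<pi>/2)\<close>,
so it maps \<open>(0, \<pi>/2)\<close> onto the open interval between them, and exponentiating
\<open>0 < g49 x < \<pi>/2 ln (\<pi>/2)\<close> gives the two inequalities.\<close>

lemma strict_mono_on_image_greaterThanLessThan:
  fixes f :: "real \<Rightarrow> real"
  assumes "a < b" and mono: "strict_mono_on {a<..<b} f" and cont: "continuous_on {a<..<b} f"
    and lim_a: "(f \<longlongrightarrow> L) (at_right a)" and lim_b: "(f \<longlongrightarrow> M) (at_left b)"
  shows "f ` {a<..<b} = {L<..<M}"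
proof (intro equalityI subsetI)
  fix y assume "y \<in> f ` {a<..<b}"
  then obtain t where t: "a < t" "t < b" "y = f t" by auto
  have "L < f t"
  proof -
    define s where "s = (a + t) / 2"
    have s: "a < s" "s < t" using t by (auto simp: s_def)
    have "L \<le> f s"
      using s t by (intro tendsto_upperbound[OF lim_a] eventually_at_rightI[OF _ \<open>a < s\<close>])
        (auto intro!: strict_mono_onD[OF mono, THEN less_imp_le])
    also have "f s < f t" using s t by (intro strict_mono_onD[OF mono]) auto
    finally show ?thesis .
  qed
  moreover have "f t < M"
  proof -
    define u where "u = (t + b) / 2"
    have u: "t < u" "u < b" using t by (auto simp: u_def)
    have "f t < f u" using u t by (intro strict_mono_onD[OF mono]) auto
    also have "f u \<le> M"
      using u t by (intro tendsto_lowerbound[OF lim_b] eventually_at_leftI[OF _ \<open>u < b\<close>])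
        (auto intro!: strict_mono_onD[OF mono, THEN less_imp_le])
    finally show ?thesis .
  qed
  ultimately show "y \<in> {L<..<M}" using t by simp
next
  fix y assume "y \<in> {L<..<M}"
  hence "L < y" "y < M" by simp_all
  have "eventually (\<lambda>r. r \<in> {a<..<b} \<and> f r < y) (at_right a)"
    by (intro eventually_conj eventually_at_right_real[OF \<open>a < b\<close>] order_tendstoD(2)[OF lim_a \<open>L < y\<close>])
  then obtain s where s: "s \<in> {a<..<b}" "f s < y"
    using eventually_happens'[OF trivial_limit_at_right_real] by blast
  have "eventually (\<lambda>r. r \<in> {a<..<b} \<and> y < f r) (at_left b)"
    by (intro eventually_conj eventually_at_left_real[OF \<open>a < b\<close>] order_tendstoD(1)[OF lim_b \<open>y < M\<close>])
  then obtain u where u: "u \<in> {a<..<b}" "y < f u"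
    using eventually_happens'[OF trivial_limit_at_left_real] by blast
  have "s < u" using s u strict_mono_on_less[OF mono s(1) u(1)] by linarith
  have "continuous_on {s..u} f" using s u by (intro continuous_on_subset[OF cont]) auto
  then obtain r where "s \<le> r" "r \<le> u" "f r = y"
    using IVT'[of f s y u] s u \<open>s < u\<close> by auto
  thus "y \<in> f ` {a<..<b}" using s u by force
qed

definition g49_angle :: "real \<Rightarrow> real" where
  "g49_angle t = t * ln t - tan t * ln (sin t)"

lemma sin_cos_in_unit_interval:
  assumes "0 < t" "t < pi / 2"
  shows "0 < sin t" "sin t < 1" "0 < cos t" "cos t < 1"
proof -
  show sin: "0 < sin t" using assms by (simp add: sin_gt_zero2)
  show cos: "0 < cos t" using assms by (simp add: cos_gt_zero)
  have "0 < (sin t)\<^sup>2" "0 < (cos t)\<^sup>2" using sin cos by simp_all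
  hence "(sin t)\<^sup>2 < 1" "(cos t)\<^sup>2 < 1" using sin_cos_squared_add[of t] by linarith+
  thus "sin t < 1" "cos t < 1" using sin cos by (simp_all add: power_less_one_iff)
qed

lemma g49_angle_has_derivative:
  assumes "0 < t" "t < pi / 2"
  shows "(g49_angle has_real_derivative ln t - ln (sin t) / (cos t)\<^sup>2) (at t)"
proof -
  note sc = sin_cos_in_unit_interval[OF assms]
  have "(g49_angle has_real_derivative
      1 * ln t + t * (1 / t) - (inverse ((cos t)\<^sup>2) * ln (sin t) + tan t * (cos t / sin t))) (at t)"
    unfolding g49_angle_def[abs_def] using assms sc by (auto intro!: derivative_eq_intros)
  moreover have "1 * ln t + t * (1 / t) - (inverse ((cos t)\<^sup>2) * ln (sin t) + tan t * (cos t / sin t))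
      = ln t - ln (sin t) / (cos t)\<^sup>2"
    using assms sc by (simp add: tan_def field_simps)
  ultimately show ?thesis by (simp only:)
qed

lemma g49_angle_derivative_pos:
  assumes "0 < t" "t < pi / 2"
  shows "0 < ln t - ln (sin t) / (cos t)\<^sup>2"
proof -
  note sc = sin_cos_in_unit_interval[OF assms]
  have "ln (sin t) \<le> ln t" using assms sc by (simp add: sin_x_le_x)
  moreover have "ln (sin t) / (cos t)\<^sup>2 < ln (sin t)"
  proof -
    have "ln (sin t) < 0" "0 < (cos t)\<^sup>2" "(cos t)\<^sup>2 < 1"
      using sc by (simp_all add: power_less_one_iff)
    thus ?thesis by (simp add: divide_less_eq mult_less_cancel_left_neg)
  qed
  ultimately show ?thesis by linarith
qed

lemma strict_mono_on_g49_angle: "strict_mono_on {0<..<pi / 2} g49_angle"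
proof (rule strict_mono_onI)
  fix a b assume "a \<in> {0<..<pi / 2}" "b \<in> {0<..<pi / 2}" "a < b"
  thus "g49_angle a < g49_angle b"
    by (intro DERIV_pos_imp_increasing[OF \<open>a < b\<close>])
      (auto intro!: exI g49_angle_has_derivative g49_angle_derivative_pos)
qed

lemma continuous_on_g49_angle: "continuous_on {0<..<pi / 2} g49_angle"
  by (intro continuous_at_imp_continuous_on ballI DERIV_isCont[OF g49_angle_has_derivative]) auto

lemma g49_angle_image: "g49_angle ` {0<..<pi / 2} = {0<..<pi / 2 * ln (pi / 2)}"
proof (rule strict_mono_on_image_greaterThanLessThan)
  show "(g49_angle \<longlongrightarrow> 0) (at_right 0)"
    unfolding g49_angle_def[abs_def] by real_asymp
  have "((\<lambda>t. t * ln t) \<longlongrightarrow> pi / 2 * ln (pi / 2)) (at_left (pi / 2))"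
    by (intro tendsto_intros) simp
  moreover have "((\<lambda>t. tan t * ln (sin t)) \<longlongrightarrow> 0) (at_left (pi / 2))"
    by real_asymp
  ultimately show "(g49_angle \<longlongrightarrow> pi / 2 * ln (pi / 2)) (at_left (pi / 2))"
    unfolding g49_angle_def[abs_def] using tendsto_diff by fastforce
qed (simp_all add: strict_mono_on_g49_angle continuous_on_g49_angle)

lemma strict_mono_on_arcsin: "strict_mono_on {0<..<1} arcsin"
  by (rule strict_mono_onI) (simp add: arcsin_less_mono)

lemma arcsin_image_unit_interval: "arcsin ` {0<..<1} = {0<..<pi / 2}"
proof (intro equalityI subsetI)
  fix t assume "t \<in> arcsin ` {0<..<1}"
  then obtain x where "0 < x" "x < 1" "t = arcsin x" by auto
  thus "t \<in> {0<..<pi / 2}"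
    using arcsin_less_mono[of 0 x] arcsin_lt_bounded[of x] by simp
next
  fix t assume "t \<in> {0<..<pi / 2}"
  hence "arcsin (sin t) = t" "sin t \<in> {0<..<1}"
    using sin_cos_in_unit_interval[of t] by (auto intro: arcsin_sin)
  thus "t \<in> arcsin ` {0<..<1}" by (metis imageI)
qed

lemma g49_eq_g49_angle_arcsin:
  assumes "0 < x" "x < 1"
  shows "g49 x = g49_angle (arcsin x)"
proof -
  have "0 < arcsin x" using arcsin_less_mono[of 0 x] assms by simp
  moreover have "tan (arcsin x) = x / sqrt (1 - x\<^sup>2)"
    using assms by (simp add: tan_def cos_arcsin)
  ultimately show ?thesis
    using assms by (simp add: g49_def g49_angle_def ln_div)
qed

lemma arcsin_powr_arcsin_eq:
  assumes "0 < x" "x < 1"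
  shows "arcsin x powr arcsin x = exp (g49 x) * x powr (x / sqrt (1 - x\<^sup>2))"
proof -
  have "0 < arcsin x" using arcsin_less_mono[of 0 x] assms by simp
  thus ?thesis using assms
    by (simp add: g49_def powr_def ln_div exp_diff exp_add)
qed

theorem lemma4p9:
  shows "strict_mono_on {0<..<1} g49
    \<and> g49 ` {0<..<1} = {0<..<pi / 2 * ln (pi / 2)}
    \<and> (\<forall>x::real. 0 < x \<and> x < 1 \<longrightarrow>
          x powr (x / sqrt (1 - x\<^sup>2)) < arcsin x powr arcsin x
        \<and> arcsin x powr arcsin x < (pi / 2) powr (pi / 2) * x powr (x / sqrt (1 - x\<^sup>2)))"
proof -
  have mono: "strict_mono_on {0<..<1} g49"
  proof (rule strict_mono_onI)
    fix x y :: real assume xy: "x \<in> {0<..<1}" "y \<in> {0<..<1}" "x < y"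
    hence "arcsin x \<in> {0<..<pi / 2}" "arcsin y \<in> {0<..<pi / 2}" "arcsin x < arcsin y"
      using arcsin_image_unit_interval strict_mono_onD[OF strict_mono_on_arcsin] by blast+
    thus "g49 x < g49 y"
      using strict_mono_onD[OF strict_mono_on_g49_angle] g49_eq_g49_angle_arcsin xy by simp
  qed
  have "g49 ` {0<..<1} = g49_angle ` arcsin ` {0<..<1}"
    unfolding image_image by (rule image_cong) (simp_all add: g49_eq_g49_angle_arcsin)
  hence image: "g49 ` {0<..<1} = {0<..<pi / 2 * ln (pi / 2)}"
    by (simp add: arcsin_image_unit_interval g49_angle_image)
  have "x powr (x / sqrt (1 - x\<^sup>2)) < arcsin x powr arcsin x
      \<and> arcsin x powr arcsin x < (pi / 2) powr (pi / 2) * x powr (x / sqrt (1 - x\<^sup>2))"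
    if "0 < x" "x < 1" for x :: real
  proof -
    have "0 < g49 x" "g49 x < pi / 2 * ln (pi / 2)" using image that by auto
    hence "1 < exp (g49 x)" "exp (g49 x) < (pi / 2) powr (pi / 2)"
      by (simp_all add: powr_def)
    thus ?thesis using that by (simp add: arcsin_powr_arcsin_eq)
  qed
  with mono image show ?thesis by blast
qed

end
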